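(* Let $\mathcal{A},\mathcal{C}$ be small categories and let $\Gamma,P:\mathcal{A}^{op}\times\mathcal{A}\times\mathcal{C}^{op}\times\mathcal{C}\to\mathbf{Set}$ be functors. Let $h$ be a dinatural transformation, dinatural in $(z,x)\in\mathcal{A}\times\mathcal{C}$, from $(z',z,x',x)\mapsto\Gamma(z',z,x',x)$ to $(z',z,x',x)\mapsto P(z',z,x',x)$, with components $h_{z,x}:\Gamma(z,z,x,x)\to P(z,z,x,x)$. Then there is a dinatural transformation $J(h)$, dinatural in $(a,b,x)\in\mathcal{A}^{op}\times\mathcal{A}\times\mathcal{C}$, from the dipresheaf $(a',b',x',a,b,x)\mapsto \hom_{\mathcal{A}}(a,b)\times\Gamma(b',a',x',x)$ to the dipresheaf $(a',b',x',a,b,x)\mapsto P(a,b,x',x)$ (here $a'\in\mathcal{A}$, $b'\in\mathcal{A}^{op}$, $x'\in\mathcal{C}^{op}$ are the contravariant arguments), with components $$J(h)_{a,b,x}:\hom_{\mathcal{A}}(a,b)\times\Gamma(b,a,x,x)\to P(a,b,x,x),$$ satisfying the computation rule $J(h)_{z,z,x}(\mathrm{id}_z,k)=h_{z,x}(k)$ for all objects $z\in\mathcal{A}$, $x\in\mathcal{C}$ and all $k\in\Gamma(z,z,x,x)$.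
   Context: A dipresheaf on a category $\mathcal{B}$ is a functor $\mathcal{B}^{op}\times\mathcal{B}\to\mathbf{Set}$; more generally a difunctor is a functor $\mathcal{B}^{op}\times\mathcal{B}\to\mathcal{D}$. For difunctors $F,G:\mathcal{B}^{op}\times\mathcal{B}\to\mathcal{D}$, a dinatural transformation $\alpha:F\Rightarrow G$ is a family of morphisms $\alpha_x:F(x,x)\to G(x,x)$, $x\in\mathcal{B}$, such that for every $f:a\to b$ in $\mathcal{B}$: $G(f,\mathrm{id}_b)\circ\alpha_b\circ F(\mathrm{id}_b,f)=G(\mathrm{id}_a,f)\circ\alpha_a\circ F(f,\mathrm{id}_a)$ as maps $F(b,a)\to G(a,b)$. When $\mathcal{B}$ is a product of categories (e.g. $\mathcal{A}\times\mathcal{C}$ or $\mathcal{A}^{op}\times\mathcal{A}\times\mathcal{C}$), a functor $\mathcal{B}^{op}\times\mathcal{B}\to\mathbf{Set}$ is written with its arguments reordered, and "dinatural in $(z,x)$" means dinatural as a family indexed by objects of the product category. Note $\hom_{\mathcal{A}}(a,b)$ is covariant in $a\in\mathcal{A}^{op}$ and $b\in\mathcal{A}$. *)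

theory Defs
  imports Main
begin

record ('o, 'm) cat =
  cObj  :: "'o set"
  cArr  :: "'m set"
  cDom  :: "'m \<Rightarrow> 'o"
  cCod  :: "'m \<Rightarrow> 'o"
  cId   :: "'o \<Rightarrow> 'm"
  cComp :: "'m \<Rightarrow> 'm \<Rightarrow> 'm"   (* cComp C g f = g \<circ> f *)

definition category :: "('o, 'm) cat \<Rightarrow> bool" where
  "category C \<longleftrightarrow>
     (\<forall>f\<in>cArr C. cDom C f \<in> cObj C \<and> cCod C f \<in> cObj C) \<and>
     (\<forall>a\<in>cObj C. cId C a \<in> cArr C \<and> cDom C (cId C a) = a \<and> cCod C (cId C a) = a) \<and>
     (\<forall>f\<in>cArr C. \<forall>g\<in>cArr C. cCod C f = cDom C g \<longrightarrow>
        cComp C g f \<in> cArr C \<and> cDom C (cComp C g f) = cDom C f \<and> cCod C (cComp C g f) = cCod C g) \<and>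
     (\<forall>f\<in>cArr C. cComp C (cId C (cCod C f)) f = f \<and> cComp C f (cId C (cDom C f)) = f) \<and>
     (\<forall>f\<in>cArr C. \<forall>g\<in>cArr C. \<forall>h\<in>cArr C. cCod C f = cDom C g \<longrightarrow> cCod C g = cDom C h \<longrightarrow>
        cComp C h (cComp C g f) = cComp C (cComp C h g) f)"

definition op_cat :: "('o, 'm) cat \<Rightarrow> ('o, 'm) cat" where
  "op_cat C = \<lparr>cObj = cObj C, cArr = cArr C, cDom = cCod C, cCod = cDom C,
               cId = cId C, cComp = (\<lambda>g f. cComp C f g)\<rparr>"

definition prod_cat :: "('o1, 'm1) cat \<Rightarrow> ('o2, 'm2) cat \<Rightarrow> ('o1 \<times> 'o2, 'm1 \<times> 'm2) cat" where
  "prod_cat C D = \<lparr>cObj = cObj C \<times> cObj D, cArr = cArr C \<times> cArr D,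
     cDom = (\<lambda>(f, g). (cDom C f, cDom D g)), cCod = (\<lambda>(f, g). (cCod C f, cCod D g)),
     cId = (\<lambda>(a, b). (cId C a, cId D b)),
     cComp = (\<lambda>(g1, g2) (f1, f2). (cComp C g1 f1, cComp D g2 f2))\<rparr>"

definition hom :: "('o, 'm) cat \<Rightarrow> 'o \<Rightarrow> 'o \<Rightarrow> 'm set" where
  "hom C a b = {f \<in> cArr C. cDom C f = a \<and> cCod C f = b}"

definition set_functor :: "('o, 'm) cat \<Rightarrow> ('o \<Rightarrow> 'e set) \<Rightarrow> ('m \<Rightarrow> 'e \<Rightarrow> 'e) \<Rightarrow> bool" where
  "set_functor D Fo Fm \<longleftrightarrow>
     (\<forall>f\<in>cArr D. \<forall>u\<in>Fo (cDom D f). Fm f u \<in> Fo (cCod D f)) \<and>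
     (\<forall>a\<in>cObj D. \<forall>u\<in>Fo a. Fm (cId D a) u = u) \<and>
     (\<forall>f\<in>cArr D. \<forall>g\<in>cArr D. cCod D f = cDom D g \<longrightarrow>
        (\<forall>u\<in>Fo (cDom D f). Fm (cComp D g f) u = Fm g (Fm f u)))"

definition dinatural ::
  "('o, 'm) cat \<Rightarrow> ('o \<times> 'o \<Rightarrow> 'e set) \<Rightarrow> ('m \<times> 'm \<Rightarrow> 'e \<Rightarrow> 'e)
     \<Rightarrow> ('o \<times> 'o \<Rightarrow> 'p set) \<Rightarrow> ('m \<times> 'm \<Rightarrow> 'p \<Rightarrow> 'p) \<Rightarrow> ('o \<Rightarrow> 'e \<Rightarrow> 'p) \<Rightarrow> bool" where
  "dinatural B Fo Fm Go Gm \<alpha> \<longleftrightarrow>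
     set_functor (prod_cat (op_cat B) B) Fo Fm \<and>
     set_functor (prod_cat (op_cat B) B) Go Gm \<and>
     (\<forall>x\<in>cObj B. \<forall>u\<in>Fo (x, x). \<alpha> x u \<in> Go (x, x)) \<and>
     (\<forall>f\<in>cArr B. \<forall>u\<in>Fo (cCod B f, cDom B f).
        Gm (f, cId B (cCod B f)) (\<alpha> (cCod B f) (Fm (cId B (cCod B f), f) u)) =
        Gm (cId B (cDom B f), f) (\<alpha> (cDom B f) (Fm (f, cId B (cDom B f)) u)))"

end

theory Submission
  imports Defs
begin

(* J(h) transports along u : a -> b on both sides of h: pull gamma in Gamma(b,a) back to
   Gamma(a,a) along u, apply h, and push the result forward to P(a,b) along u.  At u = id
   functoriality collapses this to h.  Dinaturality of J(h) at (f, g, k) reduces, after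
   absorbing g and u into a single arrow by functoriality, to two instances of dinaturality
   of h: in the A-direction at f and in the C-direction at k. *)

lemma op_cat_simps [simp]:
  "cObj (op_cat C) = cObj C" "cArr (op_cat C) = cArr C"
  "cDom (op_cat C) = cCod C" "cCod (op_cat C) = cDom C"
  "cId (op_cat C) = cId C" "cComp (op_cat C) g f = cComp C f g"
  by (simp_all add: op_cat_def)

lemma prod_cat_simps [simp]:
  "cObj (prod_cat C D) = cObj C \<times> cObj D" "cArr (prod_cat C D) = cArr C \<times> cArr D"
  "cDom (prod_cat C D) (f, g) = (cDom C f, cDom D g)"
  "cCod (prod_cat C D) (f, g) = (cCod C f, cCod D g)"
  "cId (prod_cat C D) (a, b) = (cId C a, cId D b)"
  "cComp (prod_cat C D) (g1, g2) (f1, f2) = (cComp C g1 f1, cComp D g2 f2)"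
  by (simp_all add: prod_cat_def)

locale small_category =
  fixes A :: "('o, 'm) cat"
  assumes category: "category A"
begin

lemma dom_in_Obj [simp]: "f \<in> cArr A \<Longrightarrow> cDom A f \<in> cObj A"
  and cod_in_Obj [simp]: "f \<in> cArr A \<Longrightarrow> cCod A f \<in> cObj A"
  and id_in_Arr [simp]: "a \<in> cObj A \<Longrightarrow> cId A a \<in> cArr A"
  and dom_id [simp]: "a \<in> cObj A \<Longrightarrow> cDom A (cId A a) = a"
  and cod_id [simp]: "a \<in> cObj A \<Longrightarrow> cCod A (cId A a) = a"
  using category unfolding category_def by blast+

lemma comp_in_Arr [simp]:
    "f \<in> cArr A \<Longrightarrow> g \<in> cArr A \<Longrightarrow> cCod A f = cDom A g \<Longrightarrow> cComp A g f \<in> cArr A"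
  and dom_comp [simp]:
    "f \<in> cArr A \<Longrightarrow> g \<in> cArr A \<Longrightarrow> cCod A f = cDom A g \<Longrightarrow> cDom A (cComp A g f) = cDom A f"
  and cod_comp [simp]:
    "f \<in> cArr A \<Longrightarrow> g \<in> cArr A \<Longrightarrow> cCod A f = cDom A g \<Longrightarrow> cCod A (cComp A g f) = cCod A g"
  using category unfolding category_def by blast+

lemma comp_id_left: "f \<in> cArr A \<Longrightarrow> cCod A f = b \<Longrightarrow> cComp A (cId A b) f = f"
  and comp_id_right: "f \<in> cArr A \<Longrightarrow> cDom A f = a \<Longrightarrow> cComp A f (cId A a) = f"
  using category unfolding category_def by blast+

lemma comp_assoc:
  "f \<in> cArr A \<Longrightarrow> g \<in> cArr A \<Longrightarrow> h \<in> cArr A \<Longrightarrow> cCod A f = cDom A g \<Longrightarrow> cCod A g = cDom A h \<Longrightarrow>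
   cComp A h (cComp A g f) = cComp A (cComp A h g) f"
  using category unfolding category_def by blast

end

locale bidipresheaf =
  A: small_category A + C: small_category C
  for A :: "('a, 'm) cat" and C :: "('c, 'n) cat" +
  fixes Fo :: "('a \<times> 'a) \<times> ('c \<times> 'c) \<Rightarrow> 'e set"
    and Fm :: "('m \<times> 'm) \<times> ('n \<times> 'n) \<Rightarrow> 'e \<Rightarrow> 'e"
  assumes set_functor: "set_functor (prod_cat (prod_cat (op_cat A) A) (prod_cat (op_cat C) C)) Fo Fm"
begin

lemma maps_to:
  assumes "f1 \<in> cArr A" "f2 \<in> cArr A" "k1 \<in> cArr C" "k2 \<in> cArr C"
    and "u \<in> Fo ((cCod A f1, cDom A f2), (cCod C k1, cDom C k2))"
  shows "Fm ((f1, f2), (k1, k2)) u \<in> Fo ((cDom A f1, cCod A f2), (cDom C k1, cCod C k2))"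
  using assms set_functor unfolding set_functor_def by force

lemma maps_to_Obj:
  assumes "f1 \<in> cArr A" "f2 \<in> cArr A" "k1 \<in> cArr C" "k2 \<in> cArr C"
    and "cCod A f1 = a" "cDom A f2 = b" "cCod C k1 = x" "cDom C k2 = y"
    and "cDom A f1 = a'" "cCod A f2 = b'" "cDom C k1 = x'" "cCod C k2 = y'"
    and "u \<in> Fo ((a, b), (x, y))"
  shows "Fm ((f1, f2), (k1, k2)) u \<in> Fo ((a', b'), (x', y'))"
  using maps_to assms by blast

lemma map_id:
  assumes "a \<in> cObj A" "b \<in> cObj A" "x \<in> cObj C" "y \<in> cObj C" "u \<in> Fo ((a, b), (x, y))"
  shows "Fm ((cId A a, cId A b), (cId C x, cId C y)) u = u"
  using assms set_functor unfolding set_functor_def by force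

lemma map_comp:
  assumes "f1 \<in> cArr A" "f2 \<in> cArr A" "k1 \<in> cArr C" "k2 \<in> cArr C"
    and "g1 \<in> cArr A" "g2 \<in> cArr A" "l1 \<in> cArr C" "l2 \<in> cArr C"
    and "cDom A f1 = cCod A g1" "cCod A f2 = cDom A g2" "cDom C k1 = cCod C l1" "cCod C k2 = cDom C l2"
    and "cCod A f1 = a" "cDom A f2 = b" "cCod C k1 = x" "cDom C k2 = y"
    and "u \<in> Fo ((a, b), (x, y))"
  shows "Fm ((g1, g2), (l1, l2)) (Fm ((f1, f2), (k1, k2)) u) =
         Fm ((cComp A f1 g1, cComp A g2 f2), (cComp C k1 l1, cComp C l2 k2)) u"
proof -
  let ?D = "prod_cat (prod_cat (op_cat A) A) (prod_cat (op_cat C) C)"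
  have "\<forall>f\<in>cArr ?D. \<forall>g\<in>cArr ?D. cCod ?D f = cDom ?D g \<longrightarrow>
          (\<forall>u\<in>Fo (cDom ?D f). Fm (cComp ?D g f) u = Fm g (Fm f u))"
    using set_functor unfolding set_functor_def by blast
  from this[rule_format, of "((f1, f2), (k1, k2))" "((g1, g2), (l1, l2))" u] assms
  show ?thesis by simp
qed

lemma hom_times_set_functor:
  "set_functor (prod_cat (op_cat (prod_cat (op_cat A) (prod_cat A C))) (prod_cat (op_cat A) (prod_cat A C)))
     (\<lambda>((a', b', x'), (a, b, x)). hom A a b \<times> Fo ((b', a'), (x', x)))
     (\<lambda>((f1, g1, k1), (f2, g2, k2)). (\<lambda>(u, \<gamma>). (cComp A g2 (cComp A u f2), Fm ((g1, f1), (k1, k2)) \<gamma>)))"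
  unfolding set_functor_def
  by (auto simp: hom_def A.comp_id_left A.comp_id_right A.comp_assoc maps_to map_id map_comp)

lemma reindexed_set_functor:
  "set_functor (prod_cat (op_cat (prod_cat (op_cat A) (prod_cat A C))) (prod_cat (op_cat A) (prod_cat A C)))
     (\<lambda>((a', b', x'), (a, b, x)). Fo ((a, b), (x', x)))
     (\<lambda>((f1, g1, k1), (f2, g2, k2)). Fm ((f2, g2), (k1, k2)))"
  unfolding set_functor_def by (auto simp: maps_to map_id map_comp)

end

definition directed_J ::
    "('a, 'm) cat \<Rightarrow> ('c, 'n) cat \<Rightarrow> (('m \<times> 'm) \<times> ('n \<times> 'n) \<Rightarrow> 'e \<Rightarrow> 'e)
     \<Rightarrow> (('m \<times> 'm) \<times> ('n \<times> 'n) \<Rightarrow> 'p \<Rightarrow> 'p) \<Rightarrow> ('a \<times> 'c \<Rightarrow> 'e \<Rightarrow> 'p) \<Rightarrow> 'a \<times> 'a \<times> 'c \<Rightarrow> 'm \<times> 'e \<Rightarrow> 'p"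
  where "directed_J A C \<Gamma>m Pm h = (\<lambda>(a, b, x) (u, \<gamma>).
    Pm ((cId A a, u), (cId C x, cId C x)) (h (a, x) (\<Gamma>m ((u, cId A a), (cId C x, cId C x)) \<gamma>)))"

locale dinatural_over_bidipresheaves =
  A: small_category A + C: small_category C +
  \<Gamma>: bidipresheaf A C \<Gamma>o \<Gamma>m + P: bidipresheaf A C Po Pm
  for A :: "('a, 'm) cat" and C :: "('c, 'n) cat"
    and \<Gamma>o :: "('a \<times> 'a) \<times> ('c \<times> 'c) \<Rightarrow> 'e set" and \<Gamma>m :: "('m \<times> 'm) \<times> ('n \<times> 'n) \<Rightarrow> 'e \<Rightarrow> 'e"
    and Po :: "('a \<times> 'a) \<times> ('c \<times> 'c) \<Rightarrow> 'p set" and Pm :: "('m \<times> 'm) \<times> ('n \<times> 'n) \<Rightarrow> 'p \<Rightarrow> 'p" +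
  fixes h :: "'a \<times> 'c \<Rightarrow> 'e \<Rightarrow> 'p"
  assumes dinatural_h: "dinatural (prod_cat A C)
           (\<lambda>((z', x'), (z, x)). \<Gamma>o ((z', z), (x', x)))
           (\<lambda>((f1, k1), (f2, k2)). \<Gamma>m ((f1, f2), (k1, k2)))
           (\<lambda>((z', x'), (z, x)). Po ((z', z), (x', x)))
           (\<lambda>((f1, k1), (f2, k2)). Pm ((f1, f2), (k1, k2)))
           h"
begin

abbreviation "J \<equiv> directed_J A C \<Gamma>m Pm h"

lemma h_maps_to:
  "z \<in> cObj A \<Longrightarrow> x \<in> cObj C \<Longrightarrow> w \<in> \<Gamma>o ((z, z), (x, x)) \<Longrightarrow> h (z, x) w \<in> Po ((z, z), (x, x))"
  using dinatural_h unfolding dinatural_def by auto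

lemma h_dinatural:
  assumes "f \<in> cArr A" "k \<in> cArr C" "w \<in> \<Gamma>o ((cCod A f, cDom A f), (cCod C k, cDom C k))"
  shows "Pm ((f, cId A (cCod A f)), (k, cId C (cCod C k)))
           (h (cCod A f, cCod C k) (\<Gamma>m ((cId A (cCod A f), f), (cId C (cCod C k), k)) w))
       = Pm ((cId A (cDom A f), f), (cId C (cDom C k), k))
           (h (cDom A f, cDom C k) (\<Gamma>m ((f, cId A (cDom A f)), (k, cId C (cDom C k))) w))"
  using dinatural_h assms unfolding dinatural_def
  by (auto dest!: bspec[where x = "(f, k)"] simp: case_prod_beta)

lemma J_maps_to:
  assumes "u \<in> hom A a b" "\<gamma> \<in> \<Gamma>o ((b, a), (x, x))" "x \<in> cObj C"
  shows "J (a, b, x) (u, \<gamma>) \<in> Po ((a, b), (x, x))"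
  using assms by (auto simp: directed_J_def hom_def P.maps_to_Obj \<Gamma>.maps_to_Obj h_maps_to)

lemma J_id: "z \<in> cObj A \<Longrightarrow> x \<in> cObj C \<Longrightarrow> k \<in> \<Gamma>o ((z, z), (x, x)) \<Longrightarrow> J (z, z, x) (cId A z, k) = h (z, x) k"
  by (simp add: directed_J_def \<Gamma>.map_id P.map_id h_maps_to)

lemma J_dinatural:
  assumes f: "f \<in> hom A a' a" and g: "g \<in> hom A b b'" and k: "k \<in> hom C x x'"
    and u: "u \<in> hom A a b" and \<gamma>: "\<gamma> \<in> \<Gamma>o ((b', a'), (x', x))"
  shows "Pm ((cId A a', cId A b'), (k, cId C x'))
           (J (a', b', x') (cComp A g (cComp A u f), \<Gamma>m ((cId A b', cId A a'), (cId C x', k)) \<gamma>))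
       = Pm ((f, g), (cId C x, k)) (J (a, b, x) (u, \<Gamma>m ((g, f), (k, cId C x)) \<gamma>))"
proof -
  define v where "v = cComp A g u"
  have arrs: "f \<in> cArr A" "g \<in> cArr A" "u \<in> cArr A" "k \<in> cArr C" "v \<in> cArr A"
    and ends: "cDom A f = a'" "cCod A f = a" "cDom A g = b" "cCod A g = b'" "cDom C k = x" "cCod C k = x'"
      "cDom A u = a" "cCod A u = b" "cDom A v = a" "cCod A v = b'"
    using assms by (auto simp: hom_def v_def)
  have objs: "a \<in> cObj A" "a' \<in> cObj A" "b' \<in> cObj A" "x \<in> cObj C" "x' \<in> cObj C"
    using arrs ends by (metis A.dom_in_Obj A.cod_in_Obj C.dom_in_Obj C.cod_in_Obj)+
  have vf: "cComp A g (cComp A u f) = cComp A v f"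
    using arrs ends by (simp add: v_def A.comp_assoc)
  note simps = arrs ends objs \<gamma> A.comp_id_left A.comp_id_right C.comp_id_left C.comp_id_right
    \<Gamma>.map_comp \<Gamma>.maps_to_Obj P.map_comp P.maps_to_Obj h_maps_to
  have "Pm ((cId A a', cId A b'), (k, cId C x'))
          (J (a', b', x') (cComp A g (cComp A u f), \<Gamma>m ((cId A b', cId A a'), (cId C x', k)) \<gamma>))
      = Pm ((cId A a', v), (k, cId C x')) (Pm ((cId A a', f), (cId C x', cId C x'))
          (h (a', x') (\<Gamma>m ((f, cId A a'), (cId C x', cId C x')) (\<Gamma>m ((v, cId A a'), (cId C x', k)) \<gamma>))))"
    by (simp add: vf directed_J_def simps)
  also have "\<dots> = Pm ((cId A a', v), (k, cId C x')) (Pm ((f, cId A a), (cId C x', cId C x'))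
          (h (a, x') (\<Gamma>m ((cId A a, f), (cId C x', cId C x')) (\<Gamma>m ((v, cId A a'), (cId C x', k)) \<gamma>))))"
    using h_dinatural[of f "cId C x'" "\<Gamma>m ((v, cId A a'), (cId C x', k)) \<gamma>"] by (simp add: simps)
  also have "\<dots> = Pm ((f, v), (cId C x, cId C x')) (Pm ((cId A a, cId A a), (k, cId C x'))
          (h (a, x') (\<Gamma>m ((cId A a, cId A a), (cId C x', k)) (\<Gamma>m ((v, f), (cId C x', cId C x)) \<gamma>))))"
    by (simp add: simps)
  also have "\<dots> = Pm ((f, v), (cId C x, cId C x')) (Pm ((cId A a, cId A a), (cId C x, k))
          (h (a, x) (\<Gamma>m ((cId A a, cId A a), (k, cId C x)) (\<Gamma>m ((v, f), (cId C x', cId C x)) \<gamma>))))"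
    using h_dinatural[of "cId A a" k "\<Gamma>m ((v, f), (cId C x', cId C x)) \<gamma>"] by (simp add: simps)
  also have "\<dots> = Pm ((f, g), (cId C x, k)) (J (a, b, x) (u, \<Gamma>m ((g, f), (k, cId C x)) \<gamma>))"
    by (simp add: directed_J_def v_def simps)
  finally show ?thesis .
qed

lemma dinatural_J:
  "dinatural (prod_cat (op_cat A) (prod_cat A C))
     (\<lambda>((a', b', x'), (a, b, x)). hom A a b \<times> \<Gamma>o ((b', a'), (x', x)))
     (\<lambda>((f1, g1, k1), (f2, g2, k2)). (\<lambda>(u, \<gamma>). (cComp A g2 (cComp A u f2), \<Gamma>m ((g1, f1), (k1, k2)) \<gamma>)))
     (\<lambda>((a', b', x'), (a, b, x)). Po ((a, b), (x', x)))
     (\<lambda>((f1, g1, k1), (f2, g2, k2)). Pm ((f2, g2), (k1, k2)))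
     J"
  unfolding dinatural_def
proof (intro conjI \<Gamma>.hom_times_set_functor P.reindexed_set_functor ballI, goal_cases)
  case (1 z w)
  then show ?case by (auto intro: J_maps_to)
next
  case (2 fgk w)
  then obtain f g k u \<gamma> where "fgk = (f, g, k)" "w = (u, \<gamma>)" "f \<in> cArr A" "g \<in> cArr A" "k \<in> cArr C"
    "u \<in> hom A (cCod A f) (cDom A g)" "\<gamma> \<in> \<Gamma>o ((cCod A g, cDom A f), (cCod C k, cDom C k))"
    by auto
  then show ?case
    using J_dinatural[of f _ _ g _ _ k] by (simp add: hom_def A.comp_id_left A.comp_id_right)
qed

end

theorem mainTheorem1:
  fixes A :: "('a, 'm) cat" and C :: "('c, 'n) cat"
    and \<Gamma>o :: "('a \<times> 'a) \<times> ('c \<times> 'c) \<Rightarrow> 'e set" and \<Gamma>m :: "('m \<times> 'm) \<times> ('n \<times> 'n) \<Rightarrow> 'e \<Rightarrow> 'e"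
    and Po :: "('a \<times> 'a) \<times> ('c \<times> 'c) \<Rightarrow> 'p set" and Pm :: "('m \<times> 'm) \<times> ('n \<times> 'n) \<Rightarrow> 'p \<Rightarrow> 'p"
    and h :: "'a \<times> 'c \<Rightarrow> 'e \<Rightarrow> 'p"
  assumes "category A" and "category C"
    and "set_functor (prod_cat (prod_cat (op_cat A) A) (prod_cat (op_cat C) C)) \<Gamma>o \<Gamma>m"
    and "set_functor (prod_cat (prod_cat (op_cat A) A) (prod_cat (op_cat C) C)) Po Pm"
    and "dinatural (prod_cat A C)
           (\<lambda>((z', x'), (z, x)). \<Gamma>o ((z', z), (x', x)))
           (\<lambda>((f1, k1), (f2, k2)). \<Gamma>m ((f1, f2), (k1, k2)))
           (\<lambda>((z', x'), (z, x)). Po ((z', z), (x', x)))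
           (\<lambda>((f1, k1), (f2, k2)). Pm ((f1, f2), (k1, k2)))
           h"
  shows "\<exists>J :: 'a \<times> 'a \<times> 'c \<Rightarrow> 'm \<times> 'e \<Rightarrow> 'p.
           dinatural (prod_cat (op_cat A) (prod_cat A C))
             (\<lambda>((a', b', x'), (a, b, x)). hom A a b \<times> \<Gamma>o ((b', a'), (x', x)))
             (\<lambda>((f1, g1, k1), (f2, g2, k2)).
                (\<lambda>(u, \<gamma>). (cComp A g2 (cComp A u f2), \<Gamma>m ((g1, f1), (k1, k2)) \<gamma>)))
             (\<lambda>((a', b', x'), (a, b, x)). Po ((a, b), (x', x)))
             (\<lambda>((f1, g1, k1), (f2, g2, k2)). Pm ((f2, g2), (k1, k2)))
             J
         \<and> (\<forall>z\<in>cObj A. \<forall>x\<in>cObj C. \<forall>k\<in>\<Gamma>o ((z, z), (x, x)).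
              J (z, z, x) (cId A z, k) = h (z, x) k)"
proof -
  interpret dinatural_over_bidipresheaves A C \<Gamma>o \<Gamma>m Po Pm h
    using assms by unfold_locales
  show ?thesis
    using dinatural_J J_id by blast
qed

end
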